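(* Let $A$ be an alphabet and let $w,v\in A^{*}$ with $wv\ne\varepsilon$; put $u=wv$ and $u'=vw$. Then $\rho_{u}=\rho_{u'}$, and hence $S_{u}=S_{u'}$.
   Context: For $u\in A^{+}$, $\langle u\rangle=\{u^{m}:m\ge1\}$ and $\rho_{u}$ is the syntactic congruence of $\langle u\rangle$ on $A^{+}$: for $x,y\in A^{+}$, $x\rho_{u}y$ iff for all $p,q\in A^{*}$, $pxq\in\langle u\rangle\Leftrightarrow pyq\in\langle u\rangle$. $S_{u}=A^{+}/\rho_{u}$. *)

theory Defs
  imports Main
begin

text \<open>Words over an alphabet A are lists with entries in A; A^+ is the set of
nonempty such lists, A^* is lists A.\<close>

definition plus_words :: "'a set \<Rightarrow> 'a list set" where
  "plus_words A = lists A - {[]}"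

definition pow_lang :: "'a list \<Rightarrow> 'a list set" where
  "pow_lang u = {concat (replicate m u) | m. m \<ge> 1}"

definition synt_cong :: "'a set \<Rightarrow> 'a list set \<Rightarrow> ('a list \<times> 'a list) set" where
  "synt_cong A L = {(x, y). x \<in> plus_words A \<and> y \<in> plus_words A \<and>
      (\<forall>p \<in> lists A. \<forall>q \<in> lists A. (p @ x @ q \<in> L \<longleftrightarrow> p @ y @ q \<in> L))}"

definition rho :: "'a set \<Rightarrow> 'a list \<Rightarrow> ('a list \<times> 'a list) set" where
  "rho A u = synt_cong A (pow_lang u)"

definition S_of :: "'a set \<Rightarrow> 'a list \<Rightarrow> 'a list set set" where
  "S_of A u = plus_words A // rho A u"

end

theory Submission
  imports Defs
begin

text \<open>Conjugation by w transports powers of vw to powers of wv: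
  w (vw)^m v = (wv)^(m+1). Hence for nonempty x, x is a power of vw iff w x v is a power
  of wv; taking x = p z q, every context (p, q) for vw is the context (w p, q v) for wv,
  so rho_wv refines rho_vw, and the converse follows by symmetry.\<close>

lemma concat_replicate_conjugate:
  "w @ concat (replicate m (v @ w)) @ v = concat (replicate (Suc m) (w @ v))"
  by (induction m) auto

lemma conjugate_mem_pow_lang_iff:
  assumes "x \<noteq> []"
  shows "w @ x @ v \<in> pow_lang (w @ v) \<longleftrightarrow> x \<in> pow_lang (v @ w)"
proof
  assume "w @ x @ v \<in> pow_lang (w @ v)"
  then obtain k where "k \<ge> 1" and k: "w @ x @ v = concat (replicate k (w @ v))"
    unfolding pow_lang_def by blast
  then obtain m where "k = Suc m"
    by (cases k) auto
  with k have "w @ x @ v = w @ concat (replicate m (v @ w)) @ v"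
    by (simp only: concat_replicate_conjugate)
  then have x: "x = concat (replicate m (v @ w))"
    by simp
  with assms have "m \<ge> 1"
    by (cases m) auto
  with x show "x \<in> pow_lang (v @ w)"
    unfolding pow_lang_def by blast
next
  assume "x \<in> pow_lang (v @ w)"
  then obtain m where "x = concat (replicate m (v @ w))"
    unfolding pow_lang_def by blast
  then have "w @ x @ v = concat (replicate (Suc m) (w @ v))"
    using concat_replicate_conjugate by simp
  then show "w @ x @ v \<in> pow_lang (w @ v)"
    unfolding pow_lang_def by force
qed

lemma rho_conjugate_subset:
  assumes "w \<in> lists A" and "v \<in> lists A"
  shows "rho A (w @ v) \<subseteq> rho A (v @ w)"
proof clarify
  fix x y
  assume "(x, y) \<in> rho A (w @ v)"
  then have x: "x \<in> plus_words A" and y: "y \<in> plus_words A"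
    and ctx: "\<And>p q. p \<in> lists A \<Longrightarrow> q \<in> lists A \<Longrightarrow>
      p @ x @ q \<in> pow_lang (w @ v) \<longleftrightarrow> p @ y @ q \<in> pow_lang (w @ v)"
    unfolding rho_def synt_cong_def by blast+
  have "p @ x @ q \<in> pow_lang (v @ w) \<longleftrightarrow> p @ y @ q \<in> pow_lang (v @ w)"
    if "p \<in> lists A" and "q \<in> lists A" for p q
  proof -
    have "x \<noteq> []" and "y \<noteq> []"
      using x y unfolding plus_words_def by auto
    then have "p @ x @ q \<in> pow_lang (v @ w) \<longleftrightarrow> (w @ p) @ x @ (q @ v) \<in> pow_lang (w @ v)"
      and "p @ y @ q \<in> pow_lang (v @ w) \<longleftrightarrow> (w @ p) @ y @ (q @ v) \<in> pow_lang (w @ v)"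
      using conjugate_mem_pow_lang_iff[of "p @ x @ q" w v]
        conjugate_mem_pow_lang_iff[of "p @ y @ q" w v] by simp_all
    moreover have "w @ p \<in> lists A" and "q @ v \<in> lists A"
      using that assms by auto
    ultimately show ?thesis
      using ctx by blast
  qed
  with x y show "(x, y) \<in> rho A (v @ w)"
    unfolding rho_def synt_cong_def by blast
qed

theorem lemma2p4:
  fixes A :: "'a set" and w v :: "'a list"
  assumes "w \<in> lists A" and "v \<in> lists A" and "w @ v \<noteq> []"
  shows "rho A (w @ v) = rho A (v @ w) \<and> S_of A (w @ v) = S_of A (v @ w)"
proof -
  have "rho A (w @ v) = rho A (v @ w)"
    using rho_conjugate_subset[OF assms(1,2)] rho_conjugate_subset[OF assms(2,1)] by blast
  then show ?thesis
    unfolding S_of_def by simp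
qed

end
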